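(* Let $\boldsymbol{A}\in\mathsf{PSL}$ be finite. Then $\boldsymbol{A}^+$ is the $\langle\land,\lnot,0,1\rangle$-reduct of a Heyting algebra, $\boldsymbol{A}^+\in\mathsf{PSL}$, and the map $\epsilon_{\boldsymbol{A}}\colon\boldsymbol{A}\to\boldsymbol{A}^+$ is an embedding.
   Context: $\mathsf{PSL}$ is the class of pseudocomplemented semilattices $\langle A;\land,\lnot,0,1\rangle$: $\langle A;\land\rangle$ is a semilattice (order $a\le b$ iff $a\land b=a$) with minimum $0$ and maximum $1$, and $c\land a=0\iff c\le\lnot a$. An element $a$ of a semilattice is join irreducible if it is not the minimum and, whenever $a=b\lor c$ for some $b,c$ whose join exists, $a=b$ or $a=c$; $\mathsf{J}(\boldsymbol{A})$ is the subposet of join irreducible elements. For finite $\boldsymbol{A}$, $\boldsymbol{A}^+=\langle\mathsf{Dw}(\mathsf{J}(\boldsymbol{A}));\cap,\lnot,\emptyset,\mathsf{J}(\boldsymbol{A})\rangle$, where $\mathsf{Dw}(\mathsf{J}(\boldsymbol{A}))$ is the set of downsets of $\mathsf{J}(\boldsymbol{A})$ and $\lnot D=\{a\in\mathsf{J}(\boldsymbol{A}): D\cap{\downarrow}a=\emptyset\}$; and $\epsilon_{\boldsymbol{A}}(a)=\mathsf{J}(\boldsymbol{A})\cap{\downarrow}a$. *)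

theory Defs
  imports Main
begin

definition leq :: "('a \<Rightarrow> 'a \<Rightarrow> 'a) \<Rightarrow> 'a \<Rightarrow> 'a \<Rightarrow> bool" where
  "leq m a b \<longleftrightarrow> m a b = a"

definition psl :: "'a set \<Rightarrow> ('a \<Rightarrow> 'a \<Rightarrow> 'a) \<Rightarrow> ('a \<Rightarrow> 'a) \<Rightarrow> 'a \<Rightarrow> 'a \<Rightarrow> bool" where
  "psl A m n z u \<longleftrightarrow>
     z \<in> A \<and> u \<in> A \<and>
     (\<forall>a\<in>A. \<forall>b\<in>A. m a b \<in> A) \<and> (\<forall>a\<in>A. n a \<in> A) \<and>
     (\<forall>a\<in>A. \<forall>b\<in>A. \<forall>c\<in>A. m (m a b) c = m a (m b c)) \<and>
     (\<forall>a\<in>A. \<forall>b\<in>A. m a b = m b a) \<and>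
     (\<forall>a\<in>A. m a a = a) \<and>
     (\<forall>a\<in>A. leq m z a \<and> leq m a u) \<and>
     (\<forall>a\<in>A. \<forall>c\<in>A. m c a = z \<longleftrightarrow> leq m c (n a))"

definition heyting :: "'a set \<Rightarrow> ('a \<Rightarrow> 'a \<Rightarrow> 'a) \<Rightarrow> ('a \<Rightarrow> 'a \<Rightarrow> 'a) \<Rightarrow> ('a \<Rightarrow> 'a \<Rightarrow> 'a)
     \<Rightarrow> 'a \<Rightarrow> 'a \<Rightarrow> bool" where
  "heyting H m j i z u \<longleftrightarrow>
     z \<in> H \<and> u \<in> H \<and>
     (\<forall>a\<in>H. \<forall>b\<in>H. m a b \<in> H \<and> j a b \<in> H \<and> i a b \<in> H) \<and>
     (\<forall>a\<in>H. \<forall>b\<in>H. \<forall>c\<in>H. m (m a b) c = m a (m b c) \<and> j (j a b) c = j a (j b c)) \<and>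
     (\<forall>a\<in>H. \<forall>b\<in>H. m a b = m b a \<and> j a b = j b a) \<and>
     (\<forall>a\<in>H. \<forall>b\<in>H. m a (j a b) = a \<and> j a (m a b) = a) \<and>
     (\<forall>a\<in>H. m z a = z \<and> m u a = a) \<and>
     (\<forall>a\<in>H. \<forall>b\<in>H. \<forall>c\<in>H. leq m (m c a) b \<longleftrightarrow> leq m c (i a b))"

definition is_join :: "'a set \<Rightarrow> ('a \<Rightarrow> 'a \<Rightarrow> 'a) \<Rightarrow> 'a \<Rightarrow> 'a \<Rightarrow> 'a \<Rightarrow> bool" where
  "is_join A m b c d \<longleftrightarrow> d \<in> A \<and> leq m b d \<and> leq m c d \<and>
     (\<forall>e\<in>A. leq m b e \<and> leq m c e \<longrightarrow> leq m d e)"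

definition JI :: "'a set \<Rightarrow> ('a \<Rightarrow> 'a \<Rightarrow> 'a) \<Rightarrow> 'a \<Rightarrow> 'a set" where
  "JI A m z = {a \<in> A. a \<noteq> z \<and>
      (\<forall>b\<in>A. \<forall>c\<in>A. is_join A m b c a \<longrightarrow> a = b \<or> a = c)}"

definition downsets :: "'a set \<Rightarrow> ('a \<Rightarrow> 'a \<Rightarrow> 'a) \<Rightarrow> 'a set \<Rightarrow> 'a set set" where
  "downsets A m J = {D. D \<subseteq> J \<and> (\<forall>x\<in>D. \<forall>y\<in>J. leq m y x \<longrightarrow> y \<in> D)}"

definition down :: "'a set \<Rightarrow> ('a \<Rightarrow> 'a \<Rightarrow> 'a) \<Rightarrow> 'a \<Rightarrow> 'a set" where
  "down A m a = {b \<in> A. leq m b a}"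

definition plus_neg :: "'a set \<Rightarrow> ('a \<Rightarrow> 'a \<Rightarrow> 'a) \<Rightarrow> 'a \<Rightarrow> 'a set \<Rightarrow> 'a set" where
  "plus_neg A m z D = {a \<in> JI A m z. D \<inter> down A m a = {}}"

definition eps :: "'a set \<Rightarrow> ('a \<Rightarrow> 'a \<Rightarrow> 'a) \<Rightarrow> 'a \<Rightarrow> 'a \<Rightarrow> 'a set" where
  "eps A m z a = JI A m z \<inter> down A m a"

end

theory Submission
  imports Defs
begin

text \<open>The downsets of the finite poset of join irreducibles form a Heyting algebra, and every
  Heyting algebra is a pseudocomplemented semilattice with \<open>\<not>a = a \<rightarrow> 0\<close>. The map \<open>\<epsilon>\<close> preserves
  meets because \<open>x \<le> a \<and> b\<close> iff \<open>x \<le> a\<close> and \<open>x \<le> b\<close>. The key fact is that in a finite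
  semilattice every \<open>a \<not>\<le> b\<close> is witnessed by a join irreducible \<open>x \<le> a\<close> with \<open>x \<not>\<le> b\<close>
  (a minimal element below \<open>a\<close> and not below \<open>b\<close>); it makes \<open>\<epsilon>\<close> an order embedding, hence
  injective, and shows that \<open>a = 0\<close> iff \<open>\<epsilon> a = \<emptyset>\<close>, which turns \<open>x \<le> \<not>a \<longleftrightarrow> x \<and> a = 0\<close> into
  \<open>\<epsilon>(\<not>a) = \<not>\<epsilon>(a)\<close>.\<close>

lemma heyting_psl_reduct:
  assumes H: "heyting H m j i z u" and neg: "\<forall>a\<in>H. n a = i a z"
  shows "psl H m n z u"
proof -
  have closed: "z \<in> H" "u \<in> H" "\<And>a b. \<lbrakk>a \<in> H; b \<in> H\<rbrakk> \<Longrightarrow> m a b \<in> H"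
      "\<And>a b. \<lbrakk>a \<in> H; b \<in> H\<rbrakk> \<Longrightarrow> i a b \<in> H"
    and assoc: "\<And>a b c. \<lbrakk>a \<in> H; b \<in> H; c \<in> H\<rbrakk> \<Longrightarrow> m (m a b) c = m a (m b c)"
    and comm: "\<And>a b. \<lbrakk>a \<in> H; b \<in> H\<rbrakk> \<Longrightarrow> m a b = m b a"
    and absorb: "\<And>a b. \<lbrakk>a \<in> H; b \<in> H\<rbrakk> \<Longrightarrow> m a (j a (m a b)) = a \<and> j a (m a b) = a"
    and bounds: "\<And>a. a \<in> H \<Longrightarrow> m z a = z \<and> m u a = a"
    and resid: "\<And>a b c. \<lbrakk>a \<in> H; b \<in> H; c \<in> H\<rbrakk> \<Longrightarrow> leq m (m c a) b \<longleftrightarrow> leq m c (i a b)"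
    using H unfolding heyting_def by blast+
  have idem: "m a a = a" if "a \<in> H" for a
    using absorb[OF that that] by metis
  have "m c a = z \<longleftrightarrow> leq m c (i a z)" if "a \<in> H" "c \<in> H" for a c
  proof -
    have "m (m c a) z = z" using bounds comm closed that by metis
    then have "m c a = z \<longleftrightarrow> leq m (m c a) z" unfolding leq_def by auto
    also have "\<dots> \<longleftrightarrow> leq m c (i a z)" using resid[OF that(1) closed(1) that(2)] .
    finally show ?thesis .
  qed
  moreover have "leq m z a" "leq m a u" if "a \<in> H" for a
    using bounds comm closed that unfolding leq_def by metis+
  ultimately show ?thesis
    using closed assoc comm idem neg unfolding psl_def by simp
qed

definition downset_imp :: "('a \<Rightarrow> 'a \<Rightarrow> 'a) \<Rightarrow> 'a set \<Rightarrow> 'a set \<Rightarrow> 'a set \<Rightarrow> 'a set" where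
  "downset_imp m J D E = {a \<in> J. \<forall>b\<in>J. leq m b a \<longrightarrow> b \<in> D \<longrightarrow> b \<in> E}"

lemma downset_imp_in_downsets:
  assumes trans: "\<And>x y w. \<lbrakk>x \<in> J; y \<in> J; w \<in> J; leq m x y; leq m y w\<rbrakk> \<Longrightarrow> leq m x w"
  shows "downset_imp m J D E \<in> downsets A m J"
  unfolding downsets_def downset_imp_def using trans by blast

lemma downsets_residuation:
  assumes refl: "\<And>x. x \<in> J \<Longrightarrow> leq m x x" and C: "C \<in> downsets A m J"
  shows "C \<inter> D \<subseteq> E \<longleftrightarrow> C \<subseteq> downset_imp m J D E"
  using C refl unfolding downsets_def downset_imp_def by blast

lemma heyting_downsets:
  assumes refl: "\<And>x. x \<in> J \<Longrightarrow> leq m x x"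
    and trans: "\<And>x y w. \<lbrakk>x \<in> J; y \<in> J; w \<in> J; leq m x y; leq m y w\<rbrakk> \<Longrightarrow> leq m x w"
  shows "heyting (downsets A m J) (\<inter>) (\<union>) (downset_imp m J) {} J"
proof -
  have leq_subset: "leq (\<inter>) X Y \<longleftrightarrow> X \<subseteq> Y" for X Y :: "'a set"
    unfolding leq_def by blast
  have imp: "downset_imp m J D E \<in> downsets A m J" for D E
    using trans by (rule downset_imp_in_downsets)
  have resid: "C \<inter> D \<subseteq> E \<longleftrightarrow> C \<subseteq> downset_imp m J D E" if "C \<in> downsets A m J" for C D E
    using refl that by (rule downsets_residuation)
  show ?thesis
    unfolding heyting_def leq_subset
  proof (intro conjI ballI)
    show "C \<inter> D \<subseteq> E \<longleftrightarrow> C \<subseteq> downset_imp m J D E" if "C \<in> downsets A m J" for C D E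
      using resid that .
  qed (use imp in \<open>auto simp: downsets_def\<close>)
qed

lemma plus_neg_eq_downset_imp:
  assumes "D \<in> downsets A m (JI A m z)"
  shows "plus_neg A m z D = downset_imp m (JI A m z) D {}"
proof -
  have "D \<subseteq> JI A m z" "JI A m z \<subseteq> A"
    using assms unfolding downsets_def JI_def by blast+
  then show ?thesis
    unfolding plus_neg_def downset_imp_def down_def by blast
qed

locale pseudocomplemented_semilattice =
  fixes A :: "'a set" and m :: "'a \<Rightarrow> 'a \<Rightarrow> 'a" and n :: "'a \<Rightarrow> 'a" and z u :: 'a
  assumes psl: "psl A m n z u"
begin

abbreviation J :: "'a set" where
  "J \<equiv> JI A m z"

lemma zero_in: "z \<in> A"
  and meet_closed: "\<lbrakk>a \<in> A; b \<in> A\<rbrakk> \<Longrightarrow> m a b \<in> A"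
  and meet_assoc: "\<lbrakk>a \<in> A; b \<in> A; c \<in> A\<rbrakk> \<Longrightarrow> m (m a b) c = m a (m b c)"
  and meet_commute: "\<lbrakk>a \<in> A; b \<in> A\<rbrakk> \<Longrightarrow> m a b = m b a"
  and meet_idem: "a \<in> A \<Longrightarrow> m a a = a"
  and zero_leq: "a \<in> A \<Longrightarrow> leq m z a"
  and leq_top: "a \<in> A \<Longrightarrow> leq m a u"
  and meet_eq_zero_iff: "\<lbrakk>a \<in> A; c \<in> A\<rbrakk> \<Longrightarrow> m c a = z \<longleftrightarrow> leq m c (n a)"
  using psl unfolding psl_def by blast+

lemma leq_refl: "a \<in> A \<Longrightarrow> leq m a a"
  using meet_idem unfolding leq_def .

lemma leq_trans:
  assumes "a \<in> A" "b \<in> A" "c \<in> A" "leq m a b" "leq m b c"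
  shows "leq m a c"
proof -
  have "m a c = m (m a b) c" using assms(4) unfolding leq_def by simp
  also have "\<dots> = m a (m b c)" using meet_assoc assms(1-3) .
  finally show ?thesis using assms(4,5) unfolding leq_def by simp
qed

lemma leq_antisym: "\<lbrakk>a \<in> A; b \<in> A; leq m a b; leq m b a\<rbrakk> \<Longrightarrow> a = b"
  using meet_commute unfolding leq_def by metis

lemma leq_zero_iff: "a \<in> A \<Longrightarrow> leq m a z \<longleftrightarrow> a = z"
  using leq_antisym zero_in zero_leq leq_refl by blast

lemma leq_meet_iff:
  assumes a: "a \<in> A" and b: "b \<in> A" and x: "x \<in> A"
  shows "leq m x (m a b) \<longleftrightarrow> leq m x a \<and> leq m x b"
proof -
  have "leq m (m a b) a"
    using meet_commute[OF meet_closed[OF a b] a] meet_assoc[OF a a b] meet_idem[OF a]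
    unfolding leq_def by simp
  moreover have "leq m (m a b) b"
    using meet_assoc[OF a b b] meet_idem[OF b] unfolding leq_def by simp
  moreover have "leq m x (m a b)" if "leq m x a" "leq m x b"
    using that meet_assoc[OF x a b] unfolding leq_def by simp
  ultimately show ?thesis using leq_trans[OF x meet_closed[OF a b]] a b by blast
qed

lemma JI_subset: "J \<subseteq> A"
  unfolding JI_def by blast

lemma JI_neq_zero: "x \<in> J \<Longrightarrow> x \<noteq> z"
  unfolding JI_def by blast

lemma finite_has_minimal:
  assumes fin: "finite A" and S: "S \<subseteq> A" "a \<in> S"
  obtains c where "c \<in> S" "\<And>d. \<lbrakk>d \<in> S; leq m d c\<rbrakk> \<Longrightarrow> d = c"
proof -
  obtain c where c: "c \<in> S" and least: "\<And>d. d \<in> S \<Longrightarrow> card (down A m c) \<le> card (down A m d)"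
    using ex_has_least_nat[of "\<lambda>c. c \<in> S" a "\<lambda>c. card (down A m c)"] S(2) by blast
  have "d = c" if d: "d \<in> S" "leq m d c" for d
  proof (rule ccontr)
    assume "d \<noteq> c"
    have "d \<in> A" "c \<in> A" using S(1) c d by blast+
    have "down A m d \<subseteq> down A m c"
      unfolding down_def using leq_trans[OF _ \<open>d \<in> A\<close> \<open>c \<in> A\<close> _ d(2)] by blast
    moreover have "c \<notin> down A m d" "c \<in> down A m c"
      unfolding down_def using leq_antisym[OF \<open>d \<in> A\<close> \<open>c \<in> A\<close> d(2)] \<open>d \<noteq> c\<close> leq_refl \<open>c \<in> A\<close>
      by blast+
    ultimately have "down A m d \<subset> down A m c" by blast
    moreover have "finite (down A m c)"
      unfolding down_def using fin by simp
    ultimately have "card (down A m d) < card (down A m c)"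
      by (rule psubset_card_mono[rotated])
    with least[OF d(1)] show False by simp
  qed
  with c that show ?thesis by blast
qed

lemma JI_witness:
  assumes fin: "finite A" and a: "a \<in> A" and b: "b \<in> A" and "\<not> leq m a b"
  obtains x where "x \<in> J" "leq m x a" "\<not> leq m x b"
proof -
  let ?S = "{c \<in> A. leq m c a \<and> \<not> leq m c b}"
  have "a \<in> ?S" using a \<open>\<not> leq m a b\<close> leq_refl by blast
  then obtain c where c: "c \<in> ?S" and minimal: "\<And>d. \<lbrakk>d \<in> ?S; leq m d c\<rbrakk> \<Longrightarrow> d = c"
    using finite_has_minimal[OF fin] by (metis (no_types, lifting) mem_Collect_eq subsetI)
  have "c = d \<or> c = e" if d: "d \<in> A" and e: "e \<in> A" and join: "is_join A m d e c" for d e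
  proof (rule ccontr)
    assume "\<not> (c = d \<or> c = e)"
    \<comment> \<open>\<open>d\<close> and \<open>e\<close> lie strictly below \<open>c \<le> a\<close>, so by minimality of \<open>c\<close>
      they are below \<open>b\<close>, hence so is their join \<open>c\<close>.\<close>
    then have "leq m d b" "leq m e b"
      using minimal join d e c leq_trans[OF _ _ a] unfolding is_join_def by blast+
    then show False using join b c unfolding is_join_def by blast
  qed
  moreover have "c \<noteq> z" using c zero_leq[OF b] by blast
  ultimately have "c \<in> J" using c unfolding JI_def by blast
  with c that show ?thesis by blast
qed

lemma mem_eps_iff: "x \<in> eps A m z a \<longleftrightarrow> x \<in> J \<and> leq m x a"
  unfolding eps_def down_def using JI_subset by blast

lemma eps_in_downsets: "a \<in> A \<Longrightarrow> eps A m z a \<in> downsets A m J"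
  unfolding downsets_def
proof (intro CollectI conjI ballI impI)
  fix x y assume "a \<in> A" "x \<in> eps A m z a" "y \<in> J" "leq m y x"
  then show "y \<in> eps A m z a"
    using leq_trans[of y x a] JI_subset unfolding mem_eps_iff by blast
qed (simp add: eps_def)

lemma eps_subset_iff:
  assumes "finite A" "a \<in> A" "b \<in> A"
  shows "eps A m z a \<subseteq> eps A m z b \<longleftrightarrow> leq m a b"
proof
  assume sub: "eps A m z a \<subseteq> eps A m z b"
  show "leq m a b"
  proof (rule ccontr)
    assume "\<not> leq m a b"
    then obtain x where "x \<in> J" "leq m x a" "\<not> leq m x b"
      using JI_witness[OF assms] by blast
    then have "x \<in> eps A m z a" "x \<notin> eps A m z b"
      unfolding mem_eps_iff by blast+
    with sub show False by blast
  qed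
next
  assume "leq m a b"
  then show "eps A m z a \<subseteq> eps A m z b"
    using leq_trans[of _ a b] assms JI_subset unfolding mem_eps_iff subset_iff by blast
qed

lemma inj_on_eps: "finite A \<Longrightarrow> inj_on (eps A m z) A"
  by (rule inj_onI) (metis eps_subset_iff leq_antisym order_refl)

lemma eps_zero: "eps A m z z = {}"
  using JI_subset JI_neq_zero leq_zero_iff unfolding set_eq_iff mem_eps_iff by blast

lemma eps_top: "eps A m z u = J"
  using JI_subset leq_top unfolding set_eq_iff mem_eps_iff by blast

lemma eps_eq_empty_iff: "\<lbrakk>finite A; a \<in> A\<rbrakk> \<Longrightarrow> eps A m z a = {} \<longleftrightarrow> a = z"
  using eps_subset_iff[of a z] zero_in leq_zero_iff eps_zero by auto

lemma eps_meet: "\<lbrakk>a \<in> A; b \<in> A\<rbrakk> \<Longrightarrow> eps A m z (m a b) = eps A m z a \<inter> eps A m z b"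
  using leq_meet_iff JI_subset unfolding set_eq_iff Int_iff mem_eps_iff by blast

lemma eps_neg:
  assumes fin: "finite A" and a: "a \<in> A"
  shows "eps A m z (n a) = plus_neg A m z (eps A m z a)"
proof (rule set_eqI)
  fix x
  show "x \<in> eps A m z (n a) \<longleftrightarrow> x \<in> plus_neg A m z (eps A m z a)"
  proof (cases "x \<in> J")
    case True
    then have x: "x \<in> A" using JI_subset by blast
    have "x \<in> eps A m z (n a) \<longleftrightarrow> m x a = z"
      using True meet_eq_zero_iff[OF a x] unfolding mem_eps_iff by blast
    also have "\<dots> \<longleftrightarrow> eps A m z x \<inter> eps A m z a = {}"
      using eps_eq_empty_iff[OF fin meet_closed[OF x a]] eps_meet[OF x a] by simp
    also have "\<dots> \<longleftrightarrow> x \<in> plus_neg A m z (eps A m z a)"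
      using True unfolding plus_neg_def eps_def by blast
    finally show ?thesis .
  qed (simp add: mem_eps_iff plus_neg_def)
qed

end

theorem lemma5p8:
  fixes A :: "'a set" and m :: "'a \<Rightarrow> 'a \<Rightarrow> 'a" and n :: "'a \<Rightarrow> 'a" and z u :: 'a
  assumes "psl A m n z u" and "finite A"
  defines "Ap \<equiv> downsets A m (JI A m z)"
  shows "(\<exists>j i. heyting Ap (\<inter>) j i {} (JI A m z) \<and>
                (\<forall>D\<in>Ap. plus_neg A m z D = i D {}))
     \<and> psl Ap (\<inter>) (plus_neg A m z) {} (JI A m z)
     \<and> (\<forall>a\<in>A. eps A m z a \<in> Ap)
     \<and> inj_on (eps A m z) A
     \<and> (\<forall>a\<in>A. \<forall>b\<in>A. eps A m z (m a b) = eps A m z a \<inter> eps A m z b)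
     \<and> (\<forall>a\<in>A. eps A m z (n a) = plus_neg A m z (eps A m z a))
     \<and> eps A m z z = {}
     \<and> eps A m z u = JI A m z"
proof -
  interpret pseudocomplemented_semilattice A m n z u
    using assms(1) by unfold_locales
  have heyting: "heyting Ap (\<inter>) (\<union>) (downset_imp m J) {} J"
    unfolding Ap_def
    by (rule heyting_downsets) (use JI_subset leq_refl leq_trans in blast)+
  have neg: "\<forall>D\<in>Ap. plus_neg A m z D = downset_imp m J D {}"
    unfolding Ap_def by (simp add: plus_neg_eq_downset_imp)
  have "psl Ap (\<inter>) (plus_neg A m z) {} J"
    using heyting_psl_reduct[OF heyting neg] .
  with heyting neg show ?thesis
    using eps_in_downsets inj_on_eps eps_meet eps_neg eps_zero eps_top assms(2)
    unfolding Ap_def by blast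
qed

end
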